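(* The space $X_\Delta=\mathbb C^d_\Delta/\!/N_{\mathbb C}$ is compact, i.e. every open covering of $X_\Delta$ admits a finite subcovering.
   Context: Let $\mathfrak d$ be an $n$-dimensional real vector space, $\mathfrak d_{\mathbb C}=\mathfrak d\oplus i\mathfrak d$. A quasilattice in $\mathfrak d$ is the $\mathbb Z$-submodule generated by a finite set of vectors spanning $\mathfrak d$. Let $\Delta\subset\mathfrak d^*$ be an $n$-dimensional convex polytope (not necessarily rational or simple) with $d$ facets, $\Delta=\bigcap_{j=1}^d\{\mu:\langle\mu,X_j\rangle\ge\lambda_j\}$, with chosen inward normals $X_1,\dots,X_d\in\mathfrak d$, and $Q$ a quasilattice containing them. For each face $F$, $I_F=\{j:\langle\mu,X_j\rangle=\lambda_j\text{ on }F\}$; $\mathbb C^d_\Delta=\bigcup_F\{z\in\mathbb C^d:z_j\ne0\ \forall j\notin I_F\}$ (all faces). $\pi:\mathbb R^d\to\mathfrak d$, $\pi_{\mathbb C}$, $e_j\mapsto X_j$; $\mathfrak n=\ker\pi$. $T^d_{\mathbb C}=\mathbb C^d/\mathbb Z^d$ acts on $\mathbb C^d$ by $\exp(Z)\cdot z=(e^{2\pi iZ_j}z_j)_j$; $T^d=\mathbb R^d/\mathbb Z^d$; $N=\ker(T^d\to\mathfrak d/Q)$, $N_{\mathbb C}=\ker(T^d_{\mathbb C}\to\mathfrak d_{\mathbb C}/Q)$, $A=\exp(i\mathfrak n)$. $X_\Delta$ is the quotient of $\mathbb C^d_\Delta$ by the equivalence relation $z\sim w\iff N\,\overline{Az}\cap\overline{Aw}\ne\emptyset$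 (closures in $\mathbb C^d_\Delta$), with the quotient topology (not necessarily Hausdorff). *)

theory Defs
  imports "HOL-Analysis.Analysis"
begin

definition quot_topology :: "'a topology \<Rightarrow> ('a \<Rightarrow> 'b) \<Rightarrow> 'b topology" where
  "quot_topology X f =
     topology (\<lambda>U. U \<subseteq> f ` topspace X \<and> openin X {x \<in> topspace X. f x \<in> U})"

definition quasilattice :: "'a::euclidean_space set \<Rightarrow> bool" where
  "quasilattice Q \<longleftrightarrow> (\<exists>S. finite S \<and> span S = UNIV \<and>
      Q = {(\<Sum>v\<in>S. of_int (c v) *\<^sub>R v) | c. True})"

text \<open>The polytope Delta, presented by inward normals X and constants lam.
  The dual space is identified with the space itself via the inner product.\<close>
definition Delta_poly :: "('k \<Rightarrow> 'a::euclidean_space) \<Rightarrow> ('k \<Rightarrow> real) \<Rightarrow> 'a set" where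
  "Delta_poly X lam = (\<Inter>j. {\<mu>. \<mu> \<bullet> X j \<ge> lam j})"

definition active_set :: "('k \<Rightarrow> 'a::euclidean_space) \<Rightarrow> ('k \<Rightarrow> real) \<Rightarrow> 'a set \<Rightarrow> 'k set" where
  "active_set X lam F = {j. \<forall>\<mu>\<in>F. \<mu> \<bullet> X j = lam j}"

definition Cd_Delta :: "('k::finite \<Rightarrow> 'a::euclidean_space) \<Rightarrow> ('k \<Rightarrow> real) \<Rightarrow> (complex^'k) set" where
  "Cd_Delta X lam = (\<Union>F\<in>{F. F face_of Delta_poly X lam \<and> F \<noteq> {}}.
      {z. \<forall>j. j \<notin> active_set X lam F \<longrightarrow> z $ j \<noteq> 0})"

definition torus_act :: "complex^'k \<Rightarrow> complex^'k \<Rightarrow> complex^'k" where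
  "torus_act Z z = (\<chi> j. exp (2 * of_real pi * \<i> * Z $ j) * z $ j)"

definition pi_map :: "('k::finite \<Rightarrow> 'a::real_vector) \<Rightarrow> real^'k \<Rightarrow> 'a" where
  "pi_map X t = (\<Sum>j\<in>UNIV. (t $ j) *\<^sub>R X j)"

text \<open>The orbit A z, where A = exp(i n), n = ker pi.\<close>
definition A_orbit :: "('k::finite \<Rightarrow> 'a::real_vector) \<Rightarrow> complex^'k \<Rightarrow> (complex^'k) set" where
  "A_orbit X z = {torus_act (\<chi> j. \<i> * of_real (t $ j)) z | t. pi_map X t = 0}"

text \<open>N . S, where N = ker (T^d \<rightarrow> d/Q) (represented by real vectors s with pi s in Q).\<close>
definition N_act_set :: "('k::finite \<Rightarrow> 'a::real_vector) \<Rightarrow> 'a set \<Rightarrow> (complex^'k) set \<Rightarrow> (complex^'k) set" where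
  "N_act_set X Q S = {torus_act (\<chi> j. of_real (s $ j)) w | s w. pi_map X s \<in> Q \<and> w \<in> S}"

definition X_rel :: "('k::finite \<Rightarrow> 'a::euclidean_space) \<Rightarrow> ('k \<Rightarrow> real) \<Rightarrow> 'a set
      \<Rightarrow> complex^'k \<Rightarrow> complex^'k \<Rightarrow> bool" where
  "X_rel X lam Q z w \<longleftrightarrow> z \<in> Cd_Delta X lam \<and> w \<in> Cd_Delta X lam \<and>
     N_act_set X Q (closure (A_orbit X z) \<inter> Cd_Delta X lam)
       \<inter> (closure (A_orbit X w) \<inter> Cd_Delta X lam) \<noteq> {}"

definition X_class :: "('k::finite \<Rightarrow> 'a::euclidean_space) \<Rightarrow> ('k \<Rightarrow> real) \<Rightarrow> 'a set
      \<Rightarrow> complex^'k \<Rightarrow> (complex^'k) set" where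
  "X_class X lam Q z = {w. equivclp (X_rel X lam Q) z w}"

definition X_Delta :: "('k::finite \<Rightarrow> 'a::euclidean_space) \<Rightarrow> ('k \<Rightarrow> real) \<Rightarrow> 'a set
      \<Rightarrow> (complex^'k) set topology" where
  "X_Delta X lam Q = quot_topology (subtopology euclidean (Cd_Delta X lam)) (X_class X lam Q)"

end

theory Submission
  imports Defs
begin

(*
  The quotient map C^d_Delta -> X_Delta is continuous, so it suffices to exhibit a compact
  subset K of C^d_Delta meeting every equivalence class.  For every set S of constraints
  cutting out a nonempty face of Delta, let P(S) be the closed polydisc piece
  {w. |w_j| <= 1 for all j, |w_j| = 1 for j not in S}; it is compact and contained in C^d_Delta,
  and K is the finite union of these pieces.  Every point z of C^d_Delta is A-equivalent to a
  point of K: with r_j = log|z_j| / (2 pi) and Z = {j. z_j = 0}, minimise the linear functional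
  mu |-> - <mu, sum_j r_j X_j> over the face cut out by Z.  The Karush-Kuhn-Tucker conditions
  at a minimiser mu0 (proved below from the Farkas separation lemma) give multipliers s_j, with
  s_j >= 0 off Z and s_j = 0 off the constraints active at mu0, such that t = r + s lies in the
  kernel n of pi.  Then exp(i t) z has |coordinates| exp(-2 pi s_j), i.e. it lies in P(S) for
  S the active set of mu0.  Points of one A-orbit are related, hence have the same class.
*)

section \<open>Quotient topologies\<close>

lemma istopology_quot:
  "istopology (\<lambda>U. U \<subseteq> f ` topspace X \<and> openin X {x \<in> topspace X. f x \<in> U})"
  unfolding istopology_def
proof (rule conjI; intro allI impI)
  fix S T
  assume "S \<subseteq> f ` topspace X \<and> openin X {x \<in> topspace X. f x \<in> S}"
    and "T \<subseteq> f ` topspace X \<and> openin X {x \<in> topspace X. f x \<in> T}"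
  moreover have "{x \<in> topspace X. f x \<in> S \<inter> T}
      = {x \<in> topspace X. f x \<in> S} \<inter> {x \<in> topspace X. f x \<in> T}"
    by blast
  ultimately show "S \<inter> T \<subseteq> f ` topspace X \<and> openin X {x \<in> topspace X. f x \<in> S \<inter> T}"
    by auto
next
  fix K
  assume "\<forall>U\<in>K. U \<subseteq> f ` topspace X \<and> openin X {x \<in> topspace X. f x \<in> U}"
  moreover have "{x \<in> topspace X. f x \<in> \<Union>K} = (\<Union>U\<in>K. {x \<in> topspace X. f x \<in> U})"
    by blast
  ultimately show "\<Union>K \<subseteq> f ` topspace X \<and> openin X {x \<in> topspace X. f x \<in> \<Union>K}"
    by auto
qed

lemma openin_quot_topology:
  "openin (quot_topology X f) U \<longleftrightarrow> U \<subseteq> f ` topspace X \<and> openin X {x \<in> topspace X. f x \<in> U}"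
  unfolding quot_topology_def by (simp add: istopology_quot)

lemma topspace_quot_topology: "topspace (quot_topology X f) = f ` topspace X"
proof -
  have "{x \<in> topspace X. f x \<in> f ` topspace X} = topspace X"
    by blast
  then have "openin (quot_topology X f) (f ` topspace X)"
    unfolding openin_quot_topology by simp
  then show ?thesis
    using openin_subset openin_quot_topology[of X f "topspace (quot_topology X f)"] by blast
qed

lemma continuous_map_quot_topology: "continuous_map X (quot_topology X f) f"
  unfolding continuous_map_def topspace_quot_topology openin_quot_topology by auto

lemma compact_space_quot_topology:
  assumes "compactin X K" and "f ` K = f ` topspace X"
  shows "compact_space (quot_topology X f)"
  unfolding compact_space_def topspace_quot_topology
  using image_compactin[OF assms(1) continuous_map_quot_topology, of f] assms(2) by simp

section \<open>The Farkas lemma and the Karush-Kuhn-Tucker conditions\<close>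

lemma farkas_separation:
  fixes G :: "'a::euclidean_space set"
  assumes "finite G" and "y \<notin> convex_cone hull G"
  obtains a where "\<forall>g\<in>G. 0 \<le> a \<bullet> g" and "a \<bullet> y < 0"
proof -
  obtain a b where ay: "a \<bullet> y < b" and above: "\<forall>x\<in>convex_cone hull G. b < a \<bullet> x"
    using separating_hyperplane_closed_point[OF convex_convex_cone_hull
        closed_convex_cone_hull[OF assms(1)] assms(2)] by blast
  have "b < a \<bullet> 0"
    using above convex_cone_hull_contains_0 by blast
  then have b_neg: "b < 0" by simp
  have nonneg: "0 \<le> a \<bullet> x" if x: "x \<in> convex_cone hull G" for x
  proof (rule ccontr)
    assume "\<not> 0 \<le> a \<bullet> x"
    then have neg: "a \<bullet> x < 0" by simp
    define c where "c = (b - 1) / (a \<bullet> x)"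
    have "0 \<le> c" using neg b_neg by (simp add: c_def divide_nonpos_neg)
    then have "c *\<^sub>R x \<in> convex_cone hull G"
      by (rule convex_cone_hull_mul[OF x])
    then have "b < a \<bullet> (c *\<^sub>R x)"
      using above by blast
    moreover have "a \<bullet> (c *\<^sub>R x) = b - 1" using neg by (simp add: c_def)
    ultimately show False by simp
  qed
  show thesis
    using that nonneg[OF hull_inc] ay b_neg by (meson less_trans)
qed

text \<open>Together with the next two lemmas: this is the cone generated by the X j (j in I)
  and the -X j (j in Z).\<close>

definition signed_combinations ::
    "('k::finite \<Rightarrow> 'a::real_vector) \<Rightarrow> 'k set \<Rightarrow> 'k set \<Rightarrow> 'a set" where
  "signed_combinations X Z I = {\<Sum>j\<in>UNIV. s j *\<^sub>R X j | s.
      (\<forall>j. j \<notin> Z \<longrightarrow> 0 \<le> s j) \<and> (\<forall>j. j \<notin> I \<longrightarrow> s j = 0)}"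

lemma sum_single_coefficient:
  "(\<Sum>j\<in>UNIV. (if j = i then c else 0) *\<^sub>R X j) = c *\<^sub>R (X (i::'k::finite) :: 'a::real_vector)"
proof -
  have "(\<Sum>j\<in>UNIV. (if j = i then c else 0) *\<^sub>R X j) = (\<Sum>j\<in>UNIV. if j = i then c *\<^sub>R X j else 0)"
    by (rule sum.cong) auto
  then show ?thesis by simp
qed

lemma convex_cone_signed_combinations: "convex_cone (signed_combinations X Z I)"
  unfolding convex_cone_iff
proof (intro conjI ballI allI impI)
  show "0 \<in> signed_combinations X Z I"
    unfolding signed_combinations_def by (intro CollectI exI[of _ "\<lambda>j. 0"]) simp
next
  fix x y assume "x \<in> signed_combinations X Z I" "y \<in> signed_combinations X Z I"
  then obtain s s' where
      x: "x = (\<Sum>j\<in>UNIV. s j *\<^sub>R X j)" "\<forall>j. j \<notin> Z \<longrightarrow> 0 \<le> s j" "\<forall>j. j \<notin> I \<longrightarrow> s j = 0"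
    and y: "y = (\<Sum>j\<in>UNIV. s' j *\<^sub>R X j)" "\<forall>j. j \<notin> Z \<longrightarrow> 0 \<le> s' j" "\<forall>j. j \<notin> I \<longrightarrow> s' j = 0"
    unfolding signed_combinations_def by blast
  have "x + y = (\<Sum>j\<in>UNIV. (s j + s' j) *\<^sub>R X j)"
    unfolding x(1) y(1) by (simp add: sum.distrib scaleR_add_left)
  then show "x + y \<in> signed_combinations X Z I"
    unfolding signed_combinations_def using x y by (intro CollectI exI[of _ "\<lambda>j. s j + s' j"]) auto
next
  fix x and c :: real assume "x \<in> signed_combinations X Z I" "0 \<le> c"
  then obtain s where
      x: "x = (\<Sum>j\<in>UNIV. s j *\<^sub>R X j)" "\<forall>j. j \<notin> Z \<longrightarrow> 0 \<le> s j" "\<forall>j. j \<notin> I \<longrightarrow> s j = 0"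
    unfolding signed_combinations_def by blast
  have "c *\<^sub>R x = (\<Sum>j\<in>UNIV. (c * s j) *\<^sub>R X j)"
    unfolding x(1) by (simp add: scaleR_sum_right)
  then show "c *\<^sub>R x \<in> signed_combinations X Z I"
    unfolding signed_combinations_def using x \<open>0 \<le> c\<close> by (intro CollectI exI[of _ "\<lambda>j. c * s j"]) auto
qed

lemma convex_cone_hull_subset_signed_combinations:
  assumes "Z \<subseteq> I"
  shows "convex_cone hull (X ` I \<union> uminus ` X ` Z) \<subseteq> signed_combinations X Z I"
proof (rule hull_minimal)
  show "convex_cone (signed_combinations X Z I)"
    by (rule convex_cone_signed_combinations)
  have "X i \<in> signed_combinations X Z I" if "i \<in> I" for i
    using that sum_single_coefficient[of i 1 X] unfolding signed_combinations_def
    by (intro CollectI exI[of _ "\<lambda>j. if j = i then 1 else 0"]) auto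
  moreover have "- X i \<in> signed_combinations X Z I" if "i \<in> Z" for i
    using that assms sum_single_coefficient[of i "-1" X] unfolding signed_combinations_def
    by (intro CollectI exI[of _ "\<lambda>j. if j = i then -1 else 0"]) auto
  ultimately show "X ` I \<union> uminus ` X ` Z \<subseteq> signed_combinations X Z I" by blast
qed

lemma feasible_direction:
  fixes X :: "'k::finite \<Rightarrow> 'a::real_inner"
  assumes feasible: "\<forall>j. mu \<bullet> X j \<ge> lam j"
    and active: "\<forall>j. mu \<bullet> X j = lam j \<longrightarrow> 0 \<le> a \<bullet> X j"
  obtains \<epsilon> :: real where "0 < \<epsilon>" and "\<forall>j. (mu + \<epsilon> *\<^sub>R a) \<bullet> X j \<ge> lam j"
proof -
  have "\<forall>\<^sub>F \<epsilon> in at_right 0. (mu + \<epsilon> *\<^sub>R a) \<bullet> X j \<ge> lam j" for j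
  proof (cases "mu \<bullet> X j = lam j")
    case True
    then have "0 \<le> a \<bullet> X j" using active by blast
    show ?thesis
    proof (rule eventually_mono[OF eventually_at_right_less])
      fix \<epsilon> :: real assume "0 < \<epsilon>"
      then have "0 \<le> \<epsilon> * (a \<bullet> X j)" using \<open>0 \<le> a \<bullet> X j\<close> by simp
      then show "(mu + \<epsilon> *\<^sub>R a) \<bullet> X j \<ge> lam j"
        using True by (simp add: inner_add_left)
    qed
  next
    case False
    then have slack: "lam j < mu \<bullet> X j" using feasible by (simp add: order_le_neq_trans)
    have "((\<lambda>\<epsilon>. mu \<bullet> X j + \<epsilon> * (a \<bullet> X j)) \<longlongrightarrow> mu \<bullet> X j + 0 * (a \<bullet> X j)) (at_right 0)"
      by (intro tendsto_intros)
    from order_tendstoD(1)[OF this[simplified] slack]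
    show ?thesis by (rule eventually_mono) (simp add: inner_add_left)
  qed
  then have "\<forall>\<^sub>F \<epsilon> in at_right 0. 0 < \<epsilon> \<and> (\<forall>j. (mu + \<epsilon> *\<^sub>R a) \<bullet> X j \<ge> lam j)"
    by (intro eventually_conj eventually_at_right_less eventually_all_finite) simp
  then obtain \<epsilon> :: real where "0 < \<epsilon> \<and> (\<forall>j. (mu + \<epsilon> *\<^sub>R a) \<bullet> X j \<ge> lam j)"
    using eventually_happens'[OF trivial_limit_at_right_real] by blast
  then show thesis
    using that by blast
qed

lemma minimiser_multipliers:
  fixes X :: "'k::finite \<Rightarrow> 'a::euclidean_space"
  assumes feasible: "\<forall>j. mu0 \<bullet> X j \<ge> lam j" "\<forall>j\<in>Z. mu0 \<bullet> X j = lam j"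
    and minimal: "\<And>mu. \<forall>j. mu \<bullet> X j \<ge> lam j \<Longrightarrow> \<forall>j\<in>Z. mu \<bullet> X j = lam j \<Longrightarrow> mu0 \<bullet> y \<le> mu \<bullet> y"
  shows "y \<in> signed_combinations X Z {j. mu0 \<bullet> X j = lam j}"
proof -
  define I where "I = {j. mu0 \<bullet> X j = lam j}"
  have ZI: "Z \<subseteq> I" using feasible(2) by (auto simp: I_def)
  have "y \<in> convex_cone hull (X ` I \<union> uminus ` X ` Z)"
  proof (rule ccontr)
    assume y_outside: "y \<notin> convex_cone hull (X ` I \<union> uminus ` X ` Z)"
    have "finite (X ` I \<union> uminus ` X ` Z)"
      by simp
    then obtain a where a_gen: "\<forall>g \<in> X ` I \<union> uminus ` X ` Z. 0 \<le> a \<bullet> g" and ay: "a \<bullet> y < 0"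
      using y_outside by (rule farkas_separation)
    have "\<forall>j. mu0 \<bullet> X j = lam j \<longrightarrow> 0 \<le> a \<bullet> X j"
      using a_gen by (auto simp: I_def)
    then obtain \<epsilon> :: real where \<epsilon>: "0 < \<epsilon>" "\<forall>j. (mu0 + \<epsilon> *\<^sub>R a) \<bullet> X j \<ge> lam j"
      by (rule feasible_direction[OF feasible(1)])
    have "a \<bullet> X j = 0" if "j \<in> Z" for j
    proof -
      have "X j \<in> X ` I" "- X j \<in> uminus ` X ` Z"
        using that ZI by auto
      then have "0 \<le> a \<bullet> X j" "0 \<le> a \<bullet> (- X j)"
        using a_gen by blast+
      then show ?thesis by simp
    qed
    then have "\<forall>j\<in>Z. (mu0 + \<epsilon> *\<^sub>R a) \<bullet> X j = lam j"
      using feasible(2) by (simp add: inner_add_left)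
    then have "mu0 \<bullet> y \<le> mu0 \<bullet> y + \<epsilon> * (a \<bullet> y)"
      using minimal[OF \<epsilon>(2)] by (simp add: inner_add_left)
    then show False
      using mult_pos_neg[OF \<epsilon>(1) ay] by simp
  qed
  then show ?thesis
    using convex_cone_hull_subset_signed_combinations[OF ZI] by (auto simp: I_def)
qed

section \<open>Faces of Delta and the compact pieces of C^d_Delta\<close>

lemma Delta_poly_iff: "mu \<in> Delta_poly X lam \<longleftrightarrow> (\<forall>j. mu \<bullet> X j \<ge> lam j)"
  unfolding Delta_poly_def by auto

lemma convex_Delta_poly: "convex (Delta_poly X lam)"
  unfolding Delta_poly_def
  by (intro convex_INT ballI) (subst inner_commute, rule convex_halfspace_ge)

definition constraint_face :: "('k \<Rightarrow> 'a::euclidean_space) \<Rightarrow> ('k \<Rightarrow> real) \<Rightarrow> 'k set \<Rightarrow> 'a set" where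
  "constraint_face X lam S = {mu \<in> Delta_poly X lam. \<forall>j\<in>S. mu \<bullet> X j = lam j}"

lemma constraint_face_eq:
  "constraint_face X lam S = Delta_poly X lam \<inter> (\<Inter>j\<in>S. {mu. X j \<bullet> mu = lam j})"
  unfolding constraint_face_def by (auto simp: inner_commute)

lemma constraint_face_face_of: "constraint_face X lam S face_of Delta_poly X lam"
proof (cases "S = {}")
  case True
  then show ?thesis
    unfolding constraint_face_def using face_of_refl[OF convex_Delta_poly] by simp
next
  case False
  have eq: "constraint_face X lam S = \<Inter> ((\<lambda>j. Delta_poly X lam \<inter> {mu. X j \<bullet> mu = lam j}) ` S)"
    using False unfolding constraint_face_eq by auto
  have hyperplane_face: "Delta_poly X lam \<inter> {mu. X j \<bullet> mu = lam j} face_of Delta_poly X lam" for j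
    by (rule face_of_Int_supporting_hyperplane_ge[OF convex_Delta_poly])
      (simp add: Delta_poly_iff inner_commute)
  show ?thesis
    unfolding eq by (intro face_of_Inter) (use False hyperplane_face in auto)
qed

lemma compact_constraint_face:
  "compact (Delta_poly X lam) \<Longrightarrow> compact (constraint_face X lam S)"
  unfolding constraint_face_eq
  by (intro compact_Int_closed closed_INT ballI closed_hyperplane)

definition polydisc_piece :: "'k::finite set \<Rightarrow> (complex^'k) set" where
  "polydisc_piece S = {w. \<forall>j. norm (w$j) \<le> 1 \<and> (j \<notin> S \<longrightarrow> norm (w$j) = 1)}"

lemma polydisc_piece_subset_Cd_Delta:
  fixes X :: "'k::finite \<Rightarrow> 'a::euclidean_space"
  assumes "constraint_face X lam S \<noteq> {}"
  shows "polydisc_piece S \<subseteq> Cd_Delta X lam"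
proof
  fix w assume w: "w \<in> polydisc_piece S"
  have "S \<subseteq> active_set X lam (constraint_face X lam S)"
    unfolding active_set_def constraint_face_def by auto
  have "w $ j \<noteq> 0" if "j \<notin> active_set X lam (constraint_face X lam S)" for j
  proof -
    have "j \<notin> S" using that \<open>S \<subseteq> _\<close> by blast
    then have "norm (w $ j) = 1" using w unfolding polydisc_piece_def by blast
    then show ?thesis by auto
  qed
  then show "w \<in> Cd_Delta X lam"
    unfolding Cd_Delta_def using constraint_face_face_of[of X lam S] assms by blast
qed

lemma compact_polydisc_piece:
  fixes S :: "'k::finite set"
  shows "compact (polydisc_piece S)"
  unfolding compact_eq_bounded_closed
proof
  have "norm w \<le> real CARD('k)" if "w \<in> polydisc_piece S" for w :: "complex^'k"
  proof -
    have "norm w \<le> (\<Sum>j\<in>UNIV. norm (w$j))"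
      by (simp add: norm_vec_def L2_set_le_sum)
    also have "\<dots> \<le> (\<Sum>j\<in>(UNIV::'k set). 1)"
      using that unfolding polydisc_piece_def by (intro sum_mono) blast
    finally show ?thesis by simp
  qed
  then show "bounded (polydisc_piece S)"
    unfolding bounded_iff by blast
  have piece_eq: "polydisc_piece S = {w. \<forall>j. norm (w$j) \<le> 1} \<inter> (\<Inter>j\<in>-S. {w. norm (w$j) = 1})"
    unfolding polydisc_piece_def by auto
  have norm_coordinate: "continuous_on UNIV (\<lambda>w::complex^'k. norm (w$j))" for j
    by (intro continuous_intros)
  show "closed (polydisc_piece S)"
    unfolding piece_eq
    by (intro closed_Int closed_INT closed_Collect_all ballI closed_Collect_le closed_Collect_eq
        norm_coordinate continuous_intros)
qed

section \<open>Moving a point into a polydisc piece along its A-orbit\<close>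

lemma norm_torus_act_imaginary:
  "norm (torus_act (\<chi> j. \<i> * complex_of_real (t$j)) z $ j) = exp (- (2 * pi * t$j)) * norm (z$j)"
proof -
  have "2 * complex_of_real pi * \<i> * (\<i> * complex_of_real (t$j)) = complex_of_real (- (2 * pi * t$j))"
    by (simp add: algebra_simps)
  then have "exp (2 * complex_of_real pi * \<i> * (\<i> * complex_of_real (t$j)))
      = complex_of_real (exp (- (2 * pi * t$j)))"
    by (simp only: exp_of_real)
  then show ?thesis
    unfolding torus_act_def by (simp add: norm_mult)
qed

lemma norm_torus_act_log_radius:
  assumes "z$j \<noteq> 0" and "t$j = ln (norm (z$j)) / (2 * pi) + s"
  shows "norm (torus_act (\<chi> j. \<i> * complex_of_real (t$j)) z $ j) = exp (- (2 * pi * s))"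
proof -
  have "- (2 * pi * t$j) = - ln (norm (z$j)) - 2 * pi * s"
    using assms(2) by (simp add: algebra_simps)
  then have "exp (- (2 * pi * t$j)) * norm (z$j) = exp (- ln (norm (z$j)) - 2 * pi * s) * norm (z$j)"
    by simp
  also have "\<dots> = exp (- (2 * pi * s))"
    using assms(1) by (simp add: exp_diff exp_minus field_simps)
  finally show ?thesis
    by (simp add: norm_torus_act_imaginary)
qed

lemma constraint_face_zero_coordinates:
  fixes X :: "'k::finite \<Rightarrow> 'a::euclidean_space"
  assumes "z \<in> Cd_Delta X lam"
  shows "constraint_face X lam {j. z$j = 0} \<noteq> {}"
proof -
  obtain F where F: "F face_of Delta_poly X lam" "F \<noteq> {}"
    and nonzero: "\<forall>j. j \<notin> active_set X lam F \<longrightarrow> z $ j \<noteq> 0"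
    using assms unfolding Cd_Delta_def by blast
  then have "{j. z$j = 0} \<subseteq> active_set X lam F"
    by blast
  then have "F \<subseteq> constraint_face X lam {j. z$j = 0}"
    using face_of_imp_subset[OF F(1)] unfolding constraint_face_def active_set_def by blast
  then show ?thesis
    using F(2) by blast
qed

text \<open>Every vector y is a combination of the X j with coefficients nonnegative off Z and
  supported on a set S of constraints containing Z that still cuts out a nonempty face:
  apply the KKT conditions to a minimiser of y on the face cut out by Z.\<close>

lemma face_multipliers:
  fixes X :: "'k::finite \<Rightarrow> 'a::euclidean_space"
  assumes "compact (Delta_poly X lam)" and face_Z: "constraint_face X lam Z \<noteq> {}"
  obtains S s where "constraint_face X lam S \<noteq> {}" and "y = (\<Sum>j\<in>UNIV. s j *\<^sub>R X j)"
    and "\<forall>j. j \<notin> Z \<longrightarrow> 0 \<le> s j" and "\<forall>j. j \<notin> S \<longrightarrow> s j = 0" and "Z \<subseteq> S"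
proof -
  have "continuous_on (constraint_face X lam Z) (\<lambda>mu. mu \<bullet> y)"
    by (intro continuous_intros)
  from continuous_attains_inf[OF compact_constraint_face[OF assms(1)] face_Z this]
  obtain mu0 where mu0: "mu0 \<in> constraint_face X lam Z"
    and minimal: "\<And>mu. mu \<in> constraint_face X lam Z \<Longrightarrow> mu0 \<bullet> y \<le> mu \<bullet> y"
    by blast
  define S where "S = {j. mu0 \<bullet> X j = lam j}"
  have "y \<in> signed_combinations X Z S"
    unfolding S_def using mu0 minimal
    by (intro minimiser_multipliers) (auto simp: constraint_face_def Delta_poly_iff)
  moreover have "mu0 \<in> constraint_face X lam S" and "Z \<subseteq> S"
    using mu0 unfolding constraint_face_def S_def by auto
  ultimately show thesis
    using that unfolding signed_combinations_def by blast
qed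

text \<open>Take t = r + s, where r is the log-radius of z and the multipliers s
  balance r in the kernel of pi.\<close>

lemma A_orbit_meets_polydisc_piece:
  fixes X :: "'k::finite \<Rightarrow> 'a::euclidean_space"
  assumes "compact (Delta_poly X lam)" and z: "z \<in> Cd_Delta X lam"
  obtains S w where "constraint_face X lam S \<noteq> {}" and "w \<in> A_orbit X z" and "w \<in> polydisc_piece S"
proof -
  define Z where "Z = {j. z$j = 0}"
  define r where "r j = (if z$j = 0 then 0 else ln (norm (z$j)) / (2 * pi))" for j
  have "constraint_face X lam Z \<noteq> {}"
    unfolding Z_def by (rule constraint_face_zero_coordinates[OF z])
  then obtain S s where face_S: "constraint_face X lam S \<noteq> {}"
    and s: "- (\<Sum>j\<in>UNIV. r j *\<^sub>R X j) = (\<Sum>j\<in>UNIV. s j *\<^sub>R X j)"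
      "\<forall>j. j \<notin> Z \<longrightarrow> 0 \<le> s j" "\<forall>j. j \<notin> S \<longrightarrow> s j = 0" "Z \<subseteq> S"
    by (rule face_multipliers[OF assms(1)])
  define t where "t = (\<chi> j. r j + s j)"
  define w where "w = torus_act (\<chi> j. \<i> * complex_of_real (t$j)) z"
  have "pi_map X t = (\<Sum>j\<in>UNIV. r j *\<^sub>R X j) + (\<Sum>j\<in>UNIV. s j *\<^sub>R X j)"
    unfolding pi_map_def t_def by (simp add: scaleR_add_left sum.distrib)
  then have "pi_map X t = 0"
    by (simp add: s(1)[symmetric])
  then have "w \<in> A_orbit X z"
    unfolding A_orbit_def w_def by blast
  moreover have "norm (w$j) \<le> 1 \<and> (j \<notin> S \<longrightarrow> norm (w$j) = 1)" for j
  proof (cases "z$j = 0")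
    case True
    then have "j \<in> S" using s(4) unfolding Z_def by blast
    then show ?thesis
      using True by (simp add: w_def norm_torus_act_imaginary)
  next
    case False
    then have "norm (w$j) = exp (- (2 * pi * s j))"
      unfolding w_def by (intro norm_torus_act_log_radius) (simp_all add: t_def r_def)
    moreover have "0 \<le> s j" "j \<notin> S \<longrightarrow> s j = 0"
      using s(2,3) False unfolding Z_def by auto
    ultimately show ?thesis
      by simp
  qed
  then have "w \<in> polydisc_piece S"
    unfolding polydisc_piece_def by blast
  ultimately show thesis
    using that face_S by blast
qed

lemma zero_in_quasilattice:
  assumes "quasilattice Q"
  shows "0 \<in> Q"
proof -
  obtain S where Q: "Q = {(\<Sum>v\<in>S. of_int (c v) *\<^sub>R v) | c. True}"
    using assms unfolding quasilattice_def by blast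
  show ?thesis
    unfolding Q by (intro CollectI exI[of _ "\<lambda>_. 0"]) simp
qed

lemma torus_act_zero: "torus_act (\<chi> j. 0) w = w"
  unfolding torus_act_def by (simp add: vec_eq_iff)

lemma pi_map_zero: "pi_map X 0 = 0"
  unfolding pi_map_def by simp

lemma self_in_A_orbit: "w \<in> A_orbit X w"
  unfolding A_orbit_def using pi_map_zero[of X] torus_act_zero[of w]
  by (intro CollectI exI[of _ 0]) simp

text \<open>Two points of C^d_Delta in the same A-orbit are related (take the trivial element of N).\<close>

lemma X_rel_A_orbit:
  fixes X :: "'k::finite \<Rightarrow> 'a::euclidean_space"
  assumes "z \<in> Cd_Delta X lam" and "w \<in> Cd_Delta X lam" and "0 \<in> Q" and "w \<in> A_orbit X z"
  shows "X_rel X lam Q z w"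
proof -
  have w_cl: "w \<in> closure (A_orbit X z) \<inter> Cd_Delta X lam"
    using assms(2,4) closure_subset by blast
  have "w \<in> N_act_set X Q (closure (A_orbit X z) \<inter> Cd_Delta X lam)"
    unfolding N_act_set_def mem_Collect_eq
    by (intro exI[of _ "0::real^'k"] exI[of _ w])
      (use w_cl torus_act_zero[of w] pi_map_zero[of X] assms(3) in auto)
  moreover have "w \<in> closure (A_orbit X w) \<inter> Cd_Delta X lam"
    using assms(2) self_in_A_orbit closure_subset by blast
  ultimately show ?thesis
    unfolding X_rel_def using assms(1,2) by blast
qed

lemma X_class_eq: "X_rel X lam Q z w \<Longrightarrow> X_class X lam Q z = X_class X lam Q w"
  unfolding X_class_def by (auto intro: equivclp_trans equivclp_sym r_into_equivclp)

theorem mainTheorem15: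
  fixes X :: "'k::finite \<Rightarrow> 'a::euclidean_space"
    and lam :: "'k \<Rightarrow> real"
    and Q :: "'a set"
  assumes "polytope (Delta_poly X lam)"
    and "aff_dim (Delta_poly X lam) = int DIM('a)"
    and "bij_betw (\<lambda>j. {\<mu> \<in> Delta_poly X lam. \<mu> \<bullet> X j = lam j}) UNIV
           {F. F facet_of Delta_poly X lam}"
    and "quasilattice Q"
    and "\<forall>j. X j \<in> Q"
  shows "compact_space (X_Delta X lam Q)"
proof -
  define K where "K = \<Union> (polydisc_piece ` {S. constraint_face X lam S \<noteq> {}})"
  have K_sub: "K \<subseteq> Cd_Delta X lam"
    unfolding K_def using polydisc_piece_subset_Cd_Delta by blast
  have "compact K"
    unfolding K_def by (intro compact_Union finite_imageI) (auto simp: compact_polydisc_piece)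
  then have K_compact: "compactin (subtopology euclidean (Cd_Delta X lam)) K"
    using K_sub by (simp add: compactin_subtopology)
  have "X_class X lam Q z \<in> X_class X lam Q ` K" if z: "z \<in> Cd_Delta X lam" for z
  proof -
    obtain S w where "constraint_face X lam S \<noteq> {}" and w_orbit: "w \<in> A_orbit X z"
      and "w \<in> polydisc_piece S"
      using A_orbit_meets_polydisc_piece[OF polytope_imp_compact[OF assms(1)] z] .
    then have w: "w \<in> K"
      unfolding K_def by blast
    then have "X_rel X lam Q z w"
      using X_rel_A_orbit[OF z _ zero_in_quasilattice[OF assms(4)] w_orbit] K_sub by blast
    then show ?thesis
      using X_class_eq w by (metis image_eqI)
  qed
  then have "X_class X lam Q ` K = X_class X lam Q ` Cd_Delta X lam"
    using K_sub by blast
  then have "X_class X lam Q ` K = X_class X lam Q ` topspace (subtopology euclidean (Cd_Delta X lam))"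
    by simp
  then show ?thesis
    unfolding X_Delta_def by (rule compact_space_quot_topology[OF K_compact])
qed

end
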